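(* Let $\mathcal{G}=(\mathcal{V},\mathcal{E},\mathcal{W})$ be an undirected weighted graph in which exactly one edge $e_-=(u,v)$ has negative weight and all other edges have positive weight. Let $\mathcal{G}_+=(\mathcal{V},\mathcal{E}\setminus\{e_-\},\mathcal{W})$ and assume $\mathcal{G}_+$ is connected. Then $L(\mathcal{G})$ is positive semi-definite if and only if $|\mathcal{W}(e_-)|\le \mathcal{R}_{uv}(\mathcal{G}_+)^{-1}$.
   Context: Weights $\mathcal{W}:\mathcal{E}\to\mathbb{R}\setminus\{0\}$; $W$ is the diagonal weight matrix; with an arbitrary edge orientation the incidence matrix $E$ has in the column of edge $(i,j)$ entry $+1$ in row $i$, $-1$ in row $j$, $0$ elsewhere; $L(\mathcal{G})=EWE^T$. For a weighted graph $\mathcal{H}$ on $\mathcal{V}$, the effective resistance between nodes $u,v$ is $\mathcal{R}_{uv}(\mathcal{H})=(\mathbf{e}_u-\mathbf{e}_v)^TL^{\dagger}(\mathcal{H})(\mathbf{e}_u-\mathbf{e}_v)$, where $L^{\dagger}$ is the Moore–Penrose pseudo-inverse and $\mathbf{e}_u$ is the standard basis vector of node $u$. *)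

theory Defs
  imports "HOL-Analysis.Analysis"
begin

text \<open>Vertices are the elements of a finite type 'n. An undirected graph is given by
  a set of edges, each stored with an arbitrary orientation as an ordered pair (i,j).\<close>

definition outer :: "real^'n \<Rightarrow> real^'n^'n" where
  "outer x = (\<chi> a b. x $ a * x $ b)"

definition inc_col :: "'n::finite \<times> 'n \<Rightarrow> real^'n" where
  "inc_col e = axis (fst e) 1 - axis (snd e) 1"

text \<open>L = E W E^T, written as the sum over the edges of w_e b_e b_e^T.\<close>
definition laplacian :: "('n::finite \<times> 'n) set \<Rightarrow> ('n \<times> 'n \<Rightarrow> real) \<Rightarrow> real^'n^'n" where
  "laplacian Es W = (\<Sum>e\<in>Es. W e *\<^sub>R outer (inc_col e))"

definition pinv :: "real^'n::finite^'n \<Rightarrow> real^'n^'n" where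
  "pinv A = (THE X. A ** X ** A = A \<and> X ** A ** X = X \<and>
                    transpose (A ** X) = A ** X \<and> transpose (X ** A) = X ** A)"

definition eff_res :: "('n::finite \<times> 'n) set \<Rightarrow> ('n \<times> 'n \<Rightarrow> real) \<Rightarrow> 'n \<Rightarrow> 'n \<Rightarrow> real" where
  "eff_res Es W u v = (axis u 1 - axis v 1) \<bullet> (pinv (laplacian Es W) *v (axis u 1 - axis v 1))"

definition psd :: "real^'n::finite^'n \<Rightarrow> bool" where
  "psd A \<longleftrightarrow> (\<forall>x. 0 \<le> x \<bullet> (A *v x))"

definition graph_connected :: "('n \<times> 'n) set \<Rightarrow> bool" where
  "graph_connected Es \<longleftrightarrow> (\<forall>a b. (\<lambda>x y. (x, y) \<in> Es \<or> (y, x) \<in> Es)\<^sup>*\<^sup>* a b)"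

end

theory Submission imports Defs begin

(* Removing the negative edge e = (u,v) splits the Laplacian as
   L(G) = L' + w b b^T with L' = L(G_+), w = W(e) < 0 and b = e_u - e_v.
   (1) Since G_+ is connected with positive weights, L' is positive semi-definite and
       its kernel consists of the constant vectors; from this we construct the
       Moore--Penrose pseudo-inverse explicitly and obtain L' L'^+ = I - (1/n) 1 1^T,
       so y = L'^+ b solves L' y = b (b is orthogonal to 1), and R = b^T y > 0.
   (2) A general rank-one update lemma: if A is symmetric PSD, A y = b and R = b^T y > 0,
       then A + w b b^T is PSD iff -w R <= 1.  Necessity tests the form at y;
       sufficiency is the Cauchy--Schwarz inequality (b^T x)^2 <= R x^T A x for the
       semi-inner product induced by A.
   The theorem combines (1) and (2): for w < 0, -w R <= 1 is |w| <= 1/R. *)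

section \<open>Laplacian quadratic forms\<close>

definition ones :: "real^'n::finite" where "ones = (\<chi> i. 1)"

lemma inc_col_inner: "inc_col e \<bullet> x = x $ fst e - x $ snd e"
  by (simp add: inc_col_def inner_diff_left inner_axis')

lemma inc_col_ones: "inc_col e \<bullet> ones = 0"
  by (simp add: inc_col_inner ones_def)

lemma ones_inner_ones: "ones \<bullet> (ones :: real^'n::finite) = real CARD('n)"
  by (simp add: ones_def inner_vec_def)

lemma outer_mult_vec: "outer a *v x = (a \<bullet> x) *\<^sub>R a"
  by (simp add: vec_eq_iff outer_def matrix_vector_mult_def inner_vec_def sum_distrib_left
      mult.commute mult.left_commute)

lemma sum_matrix_vector_mult: "finite S \<Longrightarrow> (\<Sum>i\<in>S. f i) *v x = (\<Sum>i\<in>S. f i *v x)"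
  by (induction S rule: finite_induct) (auto simp: matrix_vector_mult_add_rdistrib)

lemma laplacian_mult_vec:
  "laplacian Es W *v x = (\<Sum>e\<in>Es. (W e * (inc_col e \<bullet> x)) *\<^sub>R inc_col e)"
  unfolding laplacian_def
  by (simp add: sum_matrix_vector_mult scaleR_matrix_vector_assoc[symmetric] outer_mult_vec)

lemma laplacian_form:
  "y \<bullet> (laplacian Es W *v x) = (\<Sum>e\<in>Es. W e * (inc_col e \<bullet> y) * (inc_col e \<bullet> x))"
  by (simp add: laplacian_mult_vec inner_sum_right inner_commute mult.commute mult.left_commute)

lemma laplacian_symmetric: "x \<bullet> (laplacian Es W *v y) = y \<bullet> (laplacian Es W *v x)"
  by (simp add: laplacian_form mult.commute mult.left_commute)

lemma laplacian_ones: "laplacian Es W *v ones = 0"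
  by (simp add: laplacian_mult_vec inc_col_ones)

lemma ones_laplacian: "ones \<bullet> (laplacian Es W *v x) = 0"
  by (simp add: laplacian_form inc_col_ones)

lemma laplacian_remove_edge:
  assumes "e \<in> Es"
  shows "laplacian Es W = laplacian (Es - {e}) W + W e *\<^sub>R outer (inc_col e)"
  unfolding laplacian_def using sum.remove[OF finite assms] by (simp add: add.commute)

text \<open>With positive weights every edge term of x^T L x is nonnegative.\<close>
lemma laplacian_psd:
  assumes "\<forall>e\<in>Es. W e > 0"
  shows "psd (laplacian Es W)"
  unfolding psd_def laplacian_form using assms
  by (auto intro!: sum_nonneg simp: mult.assoc)

text \<open>For a connected graph with positive weights, x^T L x = 0 forces x to be constant:
  every edge term vanishes, so x agrees at the ends of every edge, hence along paths.\<close>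
lemma laplacian_connected_kernel:
  assumes conn: "graph_connected Es" and pos: "\<forall>e\<in>Es. W e > 0"
    and zero: "x \<bullet> (laplacian Es W *v x) = 0"
  shows "\<exists>c. x = c *\<^sub>R ones"
proof -
  define q where "q e = W e * (inc_col e \<bullet> x)\<^sup>2" for e
  have "sum q Es = 0"
    using zero by (simp add: laplacian_form q_def power2_eq_square mult.assoc)
  moreover have "\<forall>e\<in>Es. 0 \<le> q e"
    using pos unfolding q_def by (simp add: less_imp_le)
  ultimately have terms_zero: "q e = 0" if "e \<in> Es" for e
    using sum_nonneg_eq_0_iff[of Es q] that by simp
  have edge: "x $ a = x $ b" if "(a, b) \<in> Es" for a b
    using terms_zero[OF that] pos that by (auto simp: q_def inc_col_inner)
  have path: "x $ a = x $ b" for a b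
  proof -
    have "(\<lambda>x y. (x, y) \<in> Es \<or> (y, x) \<in> Es)\<^sup>*\<^sup>* a b"
      using conn by (simp add: graph_connected_def)
    then show ?thesis
    proof (induction rule: rtranclp_induct)
      case (step y z)
      then show ?case using edge by metis
    qed simp
  qed
  have "x = (x $ a) *\<^sub>R ones" for a
    by (auto simp: vec_eq_iff ones_def intro: path)
  thus ?thesis by blast
qed

section \<open>The pseudo-inverse of a matrix whose kernel is the constants\<close>

lemma penrose_unique:
  fixes A X Y :: "real^'n::finite^'n"
  assumes X: "A ** X ** A = A" "X ** A ** X = X" "transpose (A ** X) = A ** X" "transpose (X ** A) = X ** A"
  and Y: "A ** Y ** A = A" "Y ** A ** Y = Y" "transpose (A ** Y) = A ** Y" "transpose (Y ** A) = Y ** A"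
  shows "X = Y"
proof -
  have tA: "transpose A = transpose A ** transpose Y ** transpose A"
    using Y(1) by (metis matrix_transpose_mul matrix_mul_assoc)
  have "X = X ** (A ** X)" using X(2) by (simp add: matrix_mul_assoc)
  also have "\<dots> = X ** (transpose X ** transpose A)" using X(3) by (metis matrix_transpose_mul)
  also have "\<dots> = X ** (transpose X ** (transpose A ** transpose Y ** transpose A))" using tA by simp
  also have "\<dots> = X ** (transpose (A ** X) ** transpose (A ** Y))"
    by (simp add: matrix_transpose_mul matrix_mul_assoc)
  also have "\<dots> = X ** (A ** X) ** (A ** Y)" using X(3) Y(3) by (simp add: matrix_mul_assoc)
  also have "\<dots> = X ** A ** Y" using X(2) by (simp add: matrix_mul_assoc)
  finally have XAY: "X = X ** A ** Y" .
  have tA': "transpose A = transpose A ** transpose X ** transpose A"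
    using X(1) by (metis matrix_transpose_mul matrix_mul_assoc)
  have "Y = (Y ** A) ** Y" using Y(2) by (simp add: matrix_mul_assoc)
  also have "\<dots> = (transpose A ** transpose Y) ** Y" using Y(4) by (metis matrix_transpose_mul)
  also have "\<dots> = ((transpose A ** transpose X ** transpose A) ** transpose Y) ** Y" using tA' by simp
  also have "\<dots> = (transpose (X ** A) ** transpose (Y ** A)) ** Y"
    by (simp add: matrix_transpose_mul matrix_mul_assoc)
  also have "\<dots> = (X ** A) ** (Y ** A) ** Y" using X(4) Y(4) by simp
  also have "\<dots> = X ** A ** Y" using Y(2) by (metis matrix_mul_assoc)
  finally show ?thesis using XAY by simp
qed

lemma pinv_eqI:
  fixes A X :: "real^'n::finite^'n"
  assumes "A ** X ** A = A" "X ** A ** X = X" "transpose (A ** X) = A ** X" "transpose (X ** A) = X ** A"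
  shows "pinv A = X"
  unfolding pinv_def
proof (rule the_equality)
  fix Y
  assume "A ** Y ** A = A \<and> Y ** A ** Y = Y \<and> transpose (A ** Y) = A ** Y \<and> transpose (Y ** A) = Y ** A"
  then show "Y = X" using penrose_unique[of A Y X] assms by simp
qed (use assms in simp)

definition mean_proj :: "real^'n::finite^'n" where
  "mean_proj = (1 / real CARD('n)) *\<^sub>R outer ones"

lemma mean_proj_mult_vec:
  "mean_proj *v x = ((ones \<bullet> x) / real CARD('n)) *\<^sub>R (ones :: real^'n::finite)"
  by (simp add: mean_proj_def scaleR_matrix_vector_assoc[symmetric] outer_mult_vec)

lemma mean_proj_idem: "mean_proj *v (mean_proj *v x) = mean_proj *v (x :: real^'n::finite)"
  by (simp add: mean_proj_mult_vec inner_scaleR_right ones_inner_ones)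

lemma mean_proj_orthogonal: "ones \<bullet> b = 0 \<Longrightarrow> mean_proj *v b = 0"
  by (simp add: mean_proj_mult_vec)

lemma transpose_complement_mean_proj: "transpose (mat 1 - mean_proj) = mat 1 - (mean_proj :: real^'n::finite^'n)"
  by (simp add: vec_eq_iff transpose_def mat_def mean_proj_def outer_def ones_def)

locale constant_kernel =
  fixes A :: "real^'n::finite^'n"
  assumes A_ones: "A *v ones = 0"
    and ones_A: "\<And>x. ones \<bullet> (A *v x) = 0"
    and A_psd: "psd A"
    and A_kernel: "\<And>x. x \<bullet> (A *v x) = 0 \<Longrightarrow> \<exists>c. x = c *\<^sub>R ones"
begin

lemma A_mean_proj: "A *v (mean_proj *v x) = 0"
  by (simp add: mean_proj_mult_vec A_ones matrix_vector_mult_scaleR)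

lemma mean_proj_A: "mean_proj *v (A *v x) = 0"
  by (simp add: mean_proj_mult_vec ones_A)

text \<open>Adding the projection onto the kernel makes A invertible: x^T (A + P) x = 0
  forces x to be constant and orthogonal to the constants.\<close>
lemma shifted_invertible: "\<exists>B. B ** (A + mean_proj) = mat 1 \<and> (A + mean_proj) ** B = mat 1"
proof -
  have "x = 0" if Mx: "(A + mean_proj) *v x = 0" for x
  proof -
    have "x \<bullet> (A *v x) + (ones \<bullet> x)\<^sup>2 / real CARD('n) = 0"
      using arg_cong[OF Mx, of "inner x"]
      by (simp add: matrix_vector_mult_add_rdistrib inner_add_right mean_proj_mult_vec
          inner_commute power2_eq_square)
    moreover have "0 \<le> x \<bullet> (A *v x)" using A_psd by (simp add: psd_def)
    moreover have "0 \<le> (ones \<bullet> x)\<^sup>2 / real CARD('n)" by simp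
    ultimately have form_zero: "x \<bullet> (A *v x) = 0" and "(ones \<bullet> x)\<^sup>2 / real CARD('n) = 0"
      by linarith+
    then have "ones \<bullet> x = 0" by simp
    moreover obtain c where c: "x = c *\<^sub>R ones" using A_kernel[OF form_zero] by blast
    ultimately show "x = 0" by (simp add: ones_inner_ones)
  qed
  then obtain B where "B ** (A + mean_proj) = mat 1"
    using matrix_left_invertible_ker by blast
  then show ?thesis using matrix_left_right_inverse by blast
qed

text \<open>With B = (A + P)^{-1}, the pseudo-inverse is B - P, and A A^+ = I - P.\<close>
lemma mult_pinv: "A ** pinv A = mat 1 - mean_proj"
proof -
  obtain B where BM: "B ** (A + mean_proj) = mat 1" and MB: "(A + mean_proj) ** B = mat 1"
    using shifted_invertible by blast
  have BM_vec: "B *v (A *v x + mean_proj *v x) = x" for x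
  proof -
    have "B *v ((A + mean_proj) *v x) = x" using BM by (simp add: matrix_vector_mul_assoc)
    then show ?thesis by (simp add: matrix_vector_mult_add_rdistrib)
  qed
  have MB_vec: "A *v (B *v x) + mean_proj *v (B *v x) = x" for x
  proof -
    have "(A + mean_proj) *v (B *v x) = x" using MB by (simp add: matrix_vector_mul_assoc)
    then show ?thesis by (simp add: matrix_vector_mult_add_rdistrib)
  qed
  have B_mean_proj: "B *v (mean_proj *v x) = mean_proj *v x" for x
    using BM_vec[of "mean_proj *v x"] by (simp add: A_mean_proj mean_proj_idem)
  have mean_proj_B: "mean_proj *v (B *v x) = mean_proj *v x" for x
    using arg_cong[OF MB_vec[of x], of "(*v) mean_proj"]
    by (simp add: mean_proj_A mean_proj_idem vec.add)
  define X where "X = B - mean_proj"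
  have AX: "A ** X = mat 1 - mean_proj"
    using MB_vec mean_proj_B
    by (simp add: matrix_eq X_def matrix_vector_mul_assoc[symmetric] matrix_vector_mult_diff_rdistrib
        vec.diff A_mean_proj algebra_simps)
  have XA: "X ** A = mat 1 - mean_proj"
  proof -
    have "(X ** A) *v x = (mat 1 - mean_proj) *v x" for x
      using BM_vec[of x] B_mean_proj[of x]
      by (simp add: X_def matrix_vector_mul_assoc[symmetric] matrix_vector_mult_diff_rdistrib
          vec.diff vec.add mean_proj_A algebra_simps)
    then show ?thesis by (simp add: matrix_eq)
  qed
  have AXA: "A ** X ** A = A"
    by (simp add: matrix_eq AX matrix_vector_mul_assoc[symmetric] matrix_vector_mult_diff_rdistrib mean_proj_A)
  have XAX: "X ** A ** X = X"
  proof -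
    have "mean_proj *v (X *v x) = 0" for x
      by (simp add: X_def matrix_vector_mult_diff_rdistrib vec.diff mean_proj_B mean_proj_idem)
    then show ?thesis
      by (simp add: matrix_eq XA matrix_vector_mul_assoc[symmetric] matrix_vector_mult_diff_rdistrib)
  qed
  have "pinv A = X"
    using AXA XAX AX XA transpose_complement_mean_proj by (intro pinv_eqI) simp_all
  with AX show ?thesis by simp
qed

end

section \<open>Effective resistance in a connected positively weighted graph\<close>

lemma connected_laplacian_constant_kernel:
  assumes "graph_connected Es" and "\<forall>e\<in>Es. W e > 0"
  shows "constant_kernel (laplacian Es W)"
  using assms laplacian_ones ones_laplacian laplacian_psd laplacian_connected_kernel
  by unfold_locales blast+

lemma eff_res_inc_col:
  "eff_res Es W u v = inc_col (u, v) \<bullet> (pinv (laplacian Es W) *v inc_col (u, v))"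
  by (simp add: eff_res_def inc_col_def)

lemma laplacian_pinv_solves:
  assumes "graph_connected Es" and "\<forall>e\<in>Es. W e > 0" and "ones \<bullet> b = 0"
  shows "laplacian Es W *v (pinv (laplacian Es W) *v b) = b"
proof -
  have "laplacian Es W ** pinv (laplacian Es W) = mat 1 - mean_proj"
    using constant_kernel.mult_pinv[OF connected_laplacian_constant_kernel[OF assms(1,2)]] .
  then show ?thesis
    using mean_proj_orthogonal[OF assms(3)]
    by (simp add: matrix_vector_mul_assoc matrix_vector_mult_diff_rdistrib)
qed

text \<open>The effective resistance between distinct vertices is the energy y^T L y of the
  potential y = L^+ b; it is positive, since a zero-energy potential is constant and
  would give b = L y = 0.\<close>
lemma eff_res_pos:
  assumes conn: "graph_connected Es" and pos: "\<forall>e\<in>Es. W e > 0" and "u \<noteq> v"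
  shows "0 < eff_res Es W u v"
proof -
  define L where "L = laplacian Es W"
  define b where "b = inc_col (u, v)"
  define y where "y = pinv L *v b"
  have Ly: "L *v y = b"
    unfolding L_def y_def
    using laplacian_pinv_solves[OF conn pos, of b] inc_col_ones[of "(u, v)"] inner_commute[of ones b]
    by (simp add: b_def)
  have "eff_res Es W u v = b \<bullet> y"
    by (simp add: eff_res_inc_col L_def y_def b_def)
  also have "\<dots> = y \<bullet> (L *v y)"
    using Ly by (simp add: inner_commute)
  finally have energy: "eff_res Es W u v = y \<bullet> (L *v y)" .
  have "y \<bullet> (L *v y) \<noteq> 0"
  proof
    assume "y \<bullet> (L *v y) = 0"
    then obtain c where "y = c *\<^sub>R ones"
      using laplacian_connected_kernel[OF conn pos] by (auto simp: L_def)
    then have "b = 0" using Ly by (simp add: L_def matrix_vector_mult_scaleR laplacian_ones)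
    then have "b $ u = 0" by simp
    then show False using \<open>u \<noteq> v\<close> by (simp add: b_def inc_col_def axis_def)
  qed
  moreover have "0 \<le> y \<bullet> (L *v y)"
    using laplacian_psd[OF pos] by (simp add: L_def psd_def)
  ultimately show ?thesis using energy by simp
qed

section \<open>Rank-one updates of a positive semi-definite matrix\<close>

text \<open>Cauchy--Schwarz for the semi-inner product (x, y) \<mapsto> x^T A y of a symmetric PSD
  matrix: with a = y^T A y and c = y^T A x, the vector a x - c y has energy
  a (a x^T A x - c^2) \<ge> 0.\<close>
lemma psd_cauchy_schwarz:
  fixes A :: "real^'n::finite^'n"
  assumes psd: "psd A" and sym: "\<And>x y. x \<bullet> (A *v y) = y \<bullet> (A *v x)"
    and pos: "0 < y \<bullet> (A *v y)"
  shows "(y \<bullet> (A *v x))\<^sup>2 \<le> (y \<bullet> (A *v y)) * (x \<bullet> (A *v x))"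
proof -
  define a where "a = y \<bullet> (A *v y)"
  define c where "c = y \<bullet> (A *v x)"
  define z where "z = a *\<^sub>R x - c *\<^sub>R y"
  have "z \<bullet> (A *v z) = a * (a * (x \<bullet> (A *v x)) - c\<^sup>2)"
    using sym[of x y]
    by (simp add: z_def a_def c_def matrix_vector_mult_diff_distrib matrix_vector_mult_scaleR
        inner_diff_left inner_diff_right power2_eq_square algebra_simps)
  moreover have "0 \<le> z \<bullet> (A *v z)" using psd by (simp add: psd_def)
  ultimately have "0 \<le> a * (x \<bullet> (A *v x)) - c\<^sup>2"
    using pos by (simp add: a_def zero_le_mult_iff)
  then show ?thesis by (simp add: a_def c_def)
qed

text \<open>Let A be symmetric PSD with A y = b and R = b^T y > 0.  Then A + w b b^T is PSD
  exactly when -w R \<le> 1.  Testing at x = y gives R (1 + w R) \<ge> 0; conversely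
  (b^T x)^2 = (y^T A x)^2 \<le> R x^T A x bounds the possibly negative rank-one term.\<close>
lemma psd_rank_one_update:
  fixes A :: "real^'n::finite^'n"
  assumes psd: "psd A" and sym: "\<And>x y. x \<bullet> (A *v y) = y \<bullet> (A *v x)"
    and solves: "A *v y = b" and pos: "0 < b \<bullet> y"
  shows "psd (A + w *\<^sub>R outer b) \<longleftrightarrow> - w * (b \<bullet> y) \<le> 1"
proof -
  define R where "R = b \<bullet> y"
  have form: "x \<bullet> ((A + w *\<^sub>R outer b) *v x) = x \<bullet> (A *v x) + w * (b \<bullet> x)\<^sup>2" for x
    by (simp add: matrix_vector_mult_add_rdistrib inner_add_right outer_mult_vec
        scaleR_matrix_vector_assoc[symmetric] inner_commute power2_eq_square)
  have energy: "y \<bullet> (A *v y) = R"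
    using solves by (simp add: R_def inner_commute)
  have cs: "(b \<bullet> x)\<^sup>2 \<le> R * (x \<bullet> (A *v x))" for x
    using psd_cauchy_schwarz[OF psd sym, of y x] pos solves
    by (simp add: energy R_def sym[of y] inner_commute[of x b] inner_commute[of y b])
  show ?thesis
  proof
    assume "psd (A + w *\<^sub>R outer b)"
    then have "0 \<le> y \<bullet> ((A + w *\<^sub>R outer b) *v y)" unfolding psd_def by blast
    then have "0 \<le> R + w * R\<^sup>2" by (simp add: form energy flip: R_def)
    then have "0 \<le> R * (1 + w * R)" by (simp add: power2_eq_square algebra_simps)
    then show "- w * (b \<bullet> y) \<le> 1"
      using pos by (simp add: R_def zero_le_mult_iff)
  next
    assume bound: "- w * (b \<bullet> y) \<le> 1"
    have "0 \<le> x \<bullet> (A *v x) + w * (b \<bullet> x)\<^sup>2" for x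
    proof (cases "w \<ge> 0")
      case True
      then show ?thesis using psd by (simp add: psd_def)
    next
      case False
      have "- w * (b \<bullet> x)\<^sup>2 \<le> - w * (R * (x \<bullet> (A *v x)))"
        using cs[of x] False by (intro mult_left_mono) auto
      also have "\<dots> \<le> x \<bullet> (A *v x)"
        using bound psd mult_right_mono[of "- w * R" 1 "x \<bullet> (A *v x)"]
        by (simp add: R_def psd_def mult.assoc)
      finally show ?thesis by simp
    qed
    then show "psd (A + w *\<^sub>R outer b)" by (simp add: psd_def form)
  qed
qed

theorem theorem2:
  fixes Es :: "('n::finite \<times> 'n) set" and W :: "'n \<times> 'n \<Rightarrow> real" and u v :: 'n
  assumes no_loops: "\<forall>(a, b)\<in>Es. a \<noteq> b"
    and undirected: "\<forall>(a, b)\<in>Es. (b, a) \<notin> Es"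
    and neg_edge: "(u, v) \<in> Es" "W (u, v) < 0"
    and pos_rest: "\<forall>e\<in>Es - {(u, v)}. W e > 0"
    and conn: "graph_connected (Es - {(u, v)})"
  shows "psd (laplacian Es W) \<longleftrightarrow> \<bar>W (u, v)\<bar> \<le> inverse (eff_res (Es - {(u, v)}) W u v)"
proof -
  define L' where "L' = laplacian (Es - {(u, v)}) W"
  define b where "b = inc_col (u, v)"
  define y where "y = pinv L' *v b"
  define R where "R = eff_res (Es - {(u, v)}) W u v"
  have "u \<noteq> v" using no_loops neg_edge(1) by auto
  then have R_pos: "0 < R" unfolding R_def using eff_res_pos[OF conn pos_rest] by blast
  have solves: "L' *v y = b"
    using laplacian_pinv_solves[OF conn pos_rest, of b] inc_col_ones[of "(u, v)"] inner_commute[of ones b]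
    by (simp add: L'_def y_def b_def)
  have R_eq: "R = b \<bullet> y"
    by (simp add: R_def eff_res_inc_col L'_def y_def b_def)
  have "psd (laplacian Es W) \<longleftrightarrow> psd (L' + W (u, v) *\<^sub>R outer b)"
    using laplacian_remove_edge[OF neg_edge(1)] by (simp add: L'_def b_def)
  also have "\<dots> \<longleftrightarrow> - W (u, v) * R \<le> 1"
    using psd_rank_one_update[OF _ _ solves, of "W (u, v)"] laplacian_psd[OF pos_rest]
      laplacian_symmetric R_pos
    unfolding L'_def R_eq by blast
  also have "\<dots> \<longleftrightarrow> \<bar>W (u, v)\<bar> \<le> inverse R"
    using neg_edge(2) R_pos by (simp add: inverse_eq_divide pos_le_divide_eq)
  finally show ?thesis by (simp add: R_def)
qed

end
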